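(* Fix subgroups $s\neq s'$ in $\mathcal S$, a cohort $g\in\{1,\dots,\mathcal T\}$ and a period $t$ with $g\le t\le\mathcal T$. Assume $\mathbb E|Y_\tau(g';\sigma)|<\infty$ for all $\tau,g',\sigma$, and that $P(G=g,S=\sigma)>0$ for $\sigma\in\{s,s'\}$. (a) (Not-yet-treated comparison.) Suppose $P(G>t,S=\sigma)>0$ for $\sigma\in\{s,s'\}$, and: (i) (No anticipation) for every finite cohort $g'$, every $\tau<g'$ and every $\sigma\in\mathcal S$ with $P(G=g',S=\sigma)>0$: $\mathbb E[Y_\tau(g')\mid G=g',S=\sigma]=\mathbb E[Y_\tau(\infty)\mid G=g',S=\sigma]$; (ii) (Parallel gaps, not-yet-treated) $$\mathbb E[Y_t(\infty)-Y_{g-1}(\infty)\mid G=g,S=s]-\mathbb E[Y_t(\infty)-Y_{g-1}(\infty)\mid G=g,S=s']$$ $$=\mathbb E[Y_t(\infty)-Y_{g-1}(\infty)\mid G>t,S=s]-\mathbb E[Y_t(\infty)-Y_{g-1}(\infty)\mid G>t,S=s'].$$ Then $$DATT_{s-s'}(g,t)=\mathbb E[Y_t-Y_{g-1}\mid G=g,S=s]-\mathbb E[Y_t-Y_{g-1}\mid G=g,S=s']-\Big(\mathbb E[Y_t-Y_{g-1}\mid G>t,S=s]-\mathbb E[Y_t-Y_{g-1}\mid G>t,S=s']\Big).$$ (b) (Never-treated comparison.) Suppose $P(G=\infty,S=\sigma)>0$ for $\sigma\in\{s,s'\}$, that (i) holds, and that (ii) holds with the events $\{G>t\}$ replaced by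 $\{G=\infty\}$. Then the same formula holds with $\{G>t\}$ replaced by $\{G=\infty\}$ in the last two conditional expectations.
   Context: Time periods are $t=0,1,\dots,\mathcal T$; $\mathcal S$ is a finite set of subgroups. A unit is described by a random element consisting of: $G\in\{1,\dots,\mathcal T\}\cup\{\infty\}$, the first period in which the unit is treated ($G=\infty$ means never treated; treatment is irreversible, $W_t=\mathbf 1\{G\le t\}$); a subgroup $S\in\mathcal S$; covariates $X$; and real potential outcomes $Y_t(g';\sigma)$ for every period $t$, every possible cohort $g'$ (including $\infty$) and every $\sigma\in\mathcal S$, interpreted as the outcome at $t$ had the unit first been treated at $g'$ and belonged to subgroup $\sigma$. Write $Y_t(g'):=Y_t(g';S)$ and the observed outcome $Y_t:=Y_t(G;S)$. Units are i.i.d. draws (panel data: all $Y_0,\dots,Y_{\mathcal T}$ observed for each unit). The not-yet-treated units at period $t$ are those with $G>t$ (this includes $G=\infty$). Define $$DATT_{s-s'}(g,t):=\mathbb E[Y_t(g)-Y_t(\infty)\mid G=g,S=s]-\mathbb E[Y_t(g)-Y_t(\infty)\mid G=g,S=s'].$$ *)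

theory Defs
  imports "HOL-Probability.Probability"
begin

definition cexp :: "'a measure \<Rightarrow> 'a set \<Rightarrow> ('a \<Rightarrow> real) \<Rightarrow> real" where
  "cexp M A X = (\<integral>\<omega>. indicator A \<omega> * X \<omega> \<partial>M) / measure M A"

definition cell :: "'a measure \<Rightarrow> ('a \<Rightarrow> enat) \<Rightarrow> ('a \<Rightarrow> 's) \<Rightarrow> (enat \<Rightarrow> bool) \<Rightarrow> 's \<Rightarrow> 'a set" where
  "cell M G S C \<sigma> = {\<omega> \<in> space M. C (G \<omega>) \<and> S \<omega> = \<sigma>}"

text \<open>Potential outcome Y t g' sigma omega = Y_t(g';sigma); Y_t(g') := Y_t(g';S).\<close>
definition pot :: "(nat \<Rightarrow> enat \<Rightarrow> 's \<Rightarrow> 'a \<Rightarrow> real) \<Rightarrow> ('a \<Rightarrow> 's) \<Rightarrow> nat \<Rightarrow> enat \<Rightarrow> 'a \<Rightarrow> real" where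
  "pot Y S t g' \<omega> = Y t g' (S \<omega>) \<omega>"

text \<open>Observed outcome Y_t = Y_t(G;S).\<close>
definition obs :: "(nat \<Rightarrow> enat \<Rightarrow> 's \<Rightarrow> 'a \<Rightarrow> real) \<Rightarrow> ('a \<Rightarrow> enat) \<Rightarrow> ('a \<Rightarrow> 's) \<Rightarrow> nat \<Rightarrow> 'a \<Rightarrow> real" where
  "obs Y G S t \<omega> = Y t (G \<omega>) (S \<omega>) \<omega>"

definition DATT :: "'a measure \<Rightarrow> ('a \<Rightarrow> enat) \<Rightarrow> ('a \<Rightarrow> 's) \<Rightarrow> (nat \<Rightarrow> enat \<Rightarrow> 's \<Rightarrow> 'a \<Rightarrow> real)
    \<Rightarrow> 's \<Rightarrow> 's \<Rightarrow> nat \<Rightarrow> nat \<Rightarrow> real" where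
  "DATT M G S Y s s' g t =
     cexp M (cell M G S (\<lambda>x. x = enat g) s) (\<lambda>\<omega>. pot Y S t (enat g) \<omega> - pot Y S t \<infinity> \<omega>)
   - cexp M (cell M G S (\<lambda>x. x = enat g) s') (\<lambda>\<omega>. pot Y S t (enat g) \<omega> - pot Y S t \<infinity> \<omega>)"

end

theory Submission
  imports Defs
begin

text \<open>On the cohort-g cell, no anticipation at period g - 1 splits the observed change
  Y_t - Y_(g-1) into the effect Y_t(g) - Y_t(\<infinity>) and the untreated trend Y_t(\<infinity>) - Y_(g-1)(\<infinity>);
  parallel gaps then trade the difference of untreated trends for that of the comparison group.
  There only untreated outcomes are observed up to period t: the cell G > t is the never-treated
  cell together with the cohorts g' > t, and on each such cohort no anticipation equates the set
  integrals of Y_\<tau>(g') and Y_\<tau>(\<infinity>) for \<tau> \<le> t (trivially if the cohort is null).\<close>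

definition no_anticipation ::
    "'a measure \<Rightarrow> ('a \<Rightarrow> enat) \<Rightarrow> ('a \<Rightarrow> 's) \<Rightarrow> (nat \<Rightarrow> enat \<Rightarrow> 's \<Rightarrow> 'a \<Rightarrow> real)
      \<Rightarrow> nat \<Rightarrow> 's set \<Rightarrow> bool" where
  "no_anticipation M G S Y T SS \<longleftrightarrow> (\<forall>g'\<in>{1..T}. \<forall>\<tau><g'. \<forall>\<sigma>\<in>SS.
      measure M (cell M G S (\<lambda>x. x = enat g') \<sigma>) > 0 \<longrightarrow>
      cexp M (cell M G S (\<lambda>x. x = enat g') \<sigma>) (pot Y S \<tau> (enat g'))
        = cexp M (cell M G S (\<lambda>x. x = enat g') \<sigma>) (pot Y S \<tau> \<infinity>))"

lemma cell_in_sets: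
  assumes "G \<in> measurable M (count_space UNIV)" "S \<in> measurable M (count_space UNIV)"
  shows "cell M G S C \<sigma> \<in> sets M"
proof -
  have "cell M G S C \<sigma> = (G -` {x. C x} \<inter> space M) \<inter> (S -` {\<sigma>} \<inter> space M)"
    unfolding cell_def by auto
  moreover have "G -` {x. C x} \<inter> space M \<in> sets M"
    using measurable_sets[OF assms(1)] by fastforce
  moreover have "S -` {\<sigma>} \<inter> space M \<in> sets M"
    using measurable_sets[OF assms(2)] by fastforce
  ultimately show ?thesis
    by auto
qed

lemma pot_on_cell: "\<omega> \<in> cell M G S C \<sigma> \<Longrightarrow> pot Y S \<tau> g' \<omega> = Y \<tau> g' \<sigma> \<omega>"
  by (simp add: cell_def pot_def)

lemma obs_on_cell: "\<omega> \<in> cell M G S C \<sigma> \<Longrightarrow> obs Y G S \<tau> \<omega> = Y \<tau> (G \<omega>) \<sigma> \<omega>"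
  by (simp add: cell_def obs_def)

lemma obs_on_cohort_cell: "\<omega> \<in> cell M G S (\<lambda>x. x = g') \<sigma> \<Longrightarrow> obs Y G S \<tau> \<omega> = Y \<tau> g' \<sigma> \<omega>"
  by (simp add: cell_def obs_def)

lemma cexp_cong:
  assumes "\<And>\<omega>. \<omega> \<in> A \<Longrightarrow> f \<omega> = h \<omega>"
  shows "cexp M A f = cexp M A h"
proof -
  have "(\<integral>\<omega>. indicator A \<omega> * f \<omega> \<partial>M) = (\<integral>\<omega>. indicator A \<omega> * h \<omega> \<partial>M)"
    by (rule Bochner_Integration.integral_cong) (auto simp: assms split: split_indicator)
  then show ?thesis
    unfolding cexp_def by simp
qed

lemma cexp_diff:
  fixes f h :: "'a \<Rightarrow> real"
  assumes "integrable M (\<lambda>\<omega>. indicator A \<omega> * f \<omega>)" "integrable M (\<lambda>\<omega>. indicator A \<omega> * h \<omega>)"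
  shows "cexp M A (\<lambda>\<omega>. f \<omega> - h \<omega>) = cexp M A f - cexp M A h"
proof -
  have "(\<integral>\<omega>. indicator A \<omega> * (f \<omega> - h \<omega>) \<partial>M)
      = (\<integral>\<omega>. indicator A \<omega> * f \<omega> - indicator A \<omega> * h \<omega> \<partial>M)"
    by (simp add: algebra_simps)
  also have "\<dots> = (\<integral>\<omega>. indicator A \<omega> * f \<omega> \<partial>M) - (\<integral>\<omega>. indicator A \<omega> * h \<omega> \<partial>M)"
    using assms by (rule Bochner_Integration.integral_diff)
  finally show ?thesis
    unfolding cexp_def by (simp add: diff_divide_distrib)
qed

lemma integrable_indicator_mult:
  fixes f :: "'a \<Rightarrow> real"
  shows "A \<in> sets M \<Longrightarrow> integrable M f \<Longrightarrow> integrable M (\<lambda>\<omega>. indicator A \<omega> * f \<omega>)"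
  using integrable_mult_indicator[of A M f] by simp

lemma set_integral_eq_if_cexp_eq:
  fixes f h :: "'a \<Rightarrow> real"
  assumes "finite_measure M" "A \<in> sets M"
    and "measure M A > 0 \<Longrightarrow> cexp M A f = cexp M A h"
  shows "(\<integral>\<omega>. indicator A \<omega> * f \<omega> \<partial>M) = (\<integral>\<omega>. indicator A \<omega> * h \<omega> \<partial>M)"
proof (cases "measure M A > 0")
  case True
  then show ?thesis
    using assms(3) by (simp add: cexp_def)
next
  case False
  then have "A \<in> null_sets M"
    using assms(1,2) measure_nonneg[of M A] by (simp add: finite_measure.emeasure_eq_measure null_sets_def)
  then have "(\<integral>\<omega>. indicator A \<omega> * k \<omega> \<partial>M) = 0" for k :: "'a \<Rightarrow> real"
    by (intro integral_eq_zero_AE eventually_mono[OF AE_not_in]) auto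
  then show ?thesis
    by simp
qed

lemma cexp_treated_cohort_change:
  fixes M :: "'a measure" and G :: "'a \<Rightarrow> enat" and S :: "'a \<Rightarrow> 's"
    and Y :: "nat \<Rightarrow> enat \<Rightarrow> 's \<Rightarrow> 'a \<Rightarrow> real" and g :: enat and \<sigma> :: 's
  defines "A \<equiv> cell M G S (\<lambda>x. x = g) \<sigma>"
  assumes sets: "A \<in> sets M"
    and int: "integrable M (Y \<tau>1 g \<sigma>)" "integrable M (Y \<tau>1 \<infinity> \<sigma>)"
      "integrable M (Y \<tau>0 g \<sigma>)" "integrable M (Y \<tau>0 \<infinity> \<sigma>)"
    and no_antic: "cexp M A (pot Y S \<tau>0 g) = cexp M A (pot Y S \<tau>0 \<infinity>)"
  shows "cexp M A (\<lambda>\<omega>. obs Y G S \<tau>1 \<omega> - obs Y G S \<tau>0 \<omega>)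
    = cexp M A (\<lambda>\<omega>. pot Y S \<tau>1 g \<omega> - pot Y S \<tau>1 \<infinity> \<omega>)
    + cexp M A (\<lambda>\<omega>. pot Y S \<tau>1 \<infinity> \<omega> - pot Y S \<tau>0 \<infinity> \<omega>)"
proof -
  note diff = cexp_diff[OF integrable_indicator_mult[OF sets] integrable_indicator_mult[OF sets]]
  have "cexp M A (\<lambda>\<omega>. obs Y G S \<tau>1 \<omega> - obs Y G S \<tau>0 \<omega>)
      = cexp M A (\<lambda>\<omega>. Y \<tau>1 g \<sigma> \<omega> - Y \<tau>0 g \<sigma> \<omega>)"
    by (rule cexp_cong) (simp add: A_def obs_on_cohort_cell)
  moreover have "cexp M A (\<lambda>\<omega>. pot Y S \<tau>1 g \<omega> - pot Y S \<tau>1 \<infinity> \<omega>)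
      = cexp M A (\<lambda>\<omega>. Y \<tau>1 g \<sigma> \<omega> - Y \<tau>1 \<infinity> \<sigma> \<omega>)"
    by (rule cexp_cong) (simp add: A_def pot_on_cell)
  moreover have "cexp M A (\<lambda>\<omega>. pot Y S \<tau>1 \<infinity> \<omega> - pot Y S \<tau>0 \<infinity> \<omega>)
      = cexp M A (\<lambda>\<omega>. Y \<tau>1 \<infinity> \<sigma> \<omega> - Y \<tau>0 \<infinity> \<sigma> \<omega>)"
    by (rule cexp_cong) (simp add: A_def pot_on_cell)
  moreover have "cexp M A (pot Y S \<tau>0 g) = cexp M A (Y \<tau>0 g \<sigma>)"
    "cexp M A (pot Y S \<tau>0 \<infinity>) = cexp M A (Y \<tau>0 \<infinity> \<sigma>)"
    by (rule cexp_cong, simp add: A_def pot_on_cell)+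
  ultimately show ?thesis
    using no_antic by (simp add: diff int)
qed

lemma indicator_later_cell_split:
  fixes Z :: "enat \<Rightarrow> 'a \<Rightarrow> real"
  assumes G_range: "\<forall>\<omega>\<in>space M. G \<omega> \<in> enat ` {1..T} \<union> {\<infinity>}" and \<omega>: "\<omega> \<in> space M"
  shows "indicator (cell M G S (\<lambda>x. x > enat t) \<sigma>) \<omega> * Z (G \<omega>) \<omega>
    = indicator (cell M G S (\<lambda>x. x = \<infinity>) \<sigma>) \<omega> * Z \<infinity> \<omega>
      + (\<Sum>g'\<in>{t<..T}. indicator (cell M G S (\<lambda>x. x = enat g') \<sigma>) \<omega> * Z (enat g') \<omega>)"
proof (cases "G \<omega> = \<infinity>")
  case True
  then show ?thesis
    using \<omega> by (simp add: indicator_def cell_def)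
next
  case False
  then obtain k where k: "G \<omega> = enat k" "k \<in> {1..T}"
    using G_range \<omega> by auto
  have "(\<Sum>g'\<in>{t<..T}. indicator (cell M G S (\<lambda>x. x = enat g') \<sigma>) \<omega> * Z (enat g') \<omega>)
      = (\<Sum>g'\<in>{t<..T}. if g' = k then indicator (cell M G S (\<lambda>x. x = enat k) \<sigma>) \<omega> * Z (enat k) \<omega> else 0)"
    using \<omega> k by (intro sum.cong) (auto simp: indicator_def cell_def)
  then show ?thesis
    using \<omega> k by (auto simp: indicator_def cell_def)
qed

lemma later_cell_integral_split:
  fixes Z :: "enat \<Rightarrow> 'a \<Rightarrow> real"
  assumes G_meas: "G \<in> measurable M (count_space UNIV)"
    and S_meas: "S \<in> measurable M (count_space UNIV)"
    and G_range: "\<forall>\<omega>\<in>space M. G \<omega> \<in> enat ` {1..T} \<union> {\<infinity>}"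
    and int: "\<And>g'. g' \<in> enat ` {t<..T} \<union> {\<infinity>} \<Longrightarrow> integrable M (Z g')"
  shows "integrable M (\<lambda>\<omega>. indicator (cell M G S (\<lambda>x. x > enat t) \<sigma>) \<omega> * Z (G \<omega>) \<omega>)"
    and "(\<integral>\<omega>. indicator (cell M G S (\<lambda>x. x > enat t) \<sigma>) \<omega> * Z (G \<omega>) \<omega> \<partial>M)
      = (\<integral>\<omega>. indicator (cell M G S (\<lambda>x. x = \<infinity>) \<sigma>) \<omega> * Z \<infinity> \<omega> \<partial>M)
        + (\<Sum>g'\<in>{t<..T}. \<integral>\<omega>. indicator (cell M G S (\<lambda>x. x = enat g') \<sigma>) \<omega> * Z (enat g') \<omega> \<partial>M)"
proof -
  have int_cell: "integrable M (\<lambda>\<omega>. indicator (cell M G S C \<sigma>) \<omega> * Z g' \<omega>)"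
    if "g' \<in> enat ` {t<..T} \<union> {\<infinity>}" for C g'
    by (rule integrable_indicator_mult[OF cell_in_sets[OF G_meas S_meas] int[OF that]])
  let ?split = "\<lambda>\<omega>. indicator (cell M G S (\<lambda>x. x = \<infinity>) \<sigma>) \<omega> * Z \<infinity> \<omega>
      + (\<Sum>g'\<in>{t<..T}. indicator (cell M G S (\<lambda>x. x = enat g') \<sigma>) \<omega> * Z (enat g') \<omega>)"
  note pointwise = indicator_later_cell_split[OF G_range, where Z=Z and t=t and \<sigma>=\<sigma> and S=S]
  have eq: "integrable M (\<lambda>\<omega>. indicator (cell M G S (\<lambda>x. x > enat t) \<sigma>) \<omega> * Z (G \<omega>) \<omega>)
      = integrable M ?split"
    "(\<integral>\<omega>. indicator (cell M G S (\<lambda>x. x > enat t) \<sigma>) \<omega> * Z (G \<omega>) \<omega> \<partial>M) = integral\<^sup>L M ?split"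
    by (intro Bochner_Integration.integrable_cong Bochner_Integration.integral_cong refl pointwise,
        assumption)+
  show "integrable M (\<lambda>\<omega>. indicator (cell M G S (\<lambda>x. x > enat t) \<sigma>) \<omega> * Z (G \<omega>) \<omega>)"
    unfolding eq(1)
    by (intro Bochner_Integration.integrable_add Bochner_Integration.integrable_sum int_cell) auto
  show "(\<integral>\<omega>. indicator (cell M G S (\<lambda>x. x > enat t) \<sigma>) \<omega> * Z (G \<omega>) \<omega> \<partial>M)
      = (\<integral>\<omega>. indicator (cell M G S (\<lambda>x. x = \<infinity>) \<sigma>) \<omega> * Z \<infinity> \<omega> \<partial>M)
        + (\<Sum>g'\<in>{t<..T}. \<integral>\<omega>. indicator (cell M G S (\<lambda>x. x = enat g') \<sigma>) \<omega> * Z (enat g') \<omega> \<partial>M)"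
  proof -
    have "integral\<^sup>L M ?split
        = (\<integral>\<omega>. indicator (cell M G S (\<lambda>x. x = \<infinity>) \<sigma>) \<omega> * Z \<infinity> \<omega> \<partial>M)
          + (\<integral>\<omega>. (\<Sum>g'\<in>{t<..T}. indicator (cell M G S (\<lambda>x. x = enat g') \<sigma>) \<omega> * Z (enat g') \<omega>) \<partial>M)"
      by (intro Bochner_Integration.integral_add Bochner_Integration.integrable_sum int_cell) auto
    also have "(\<integral>\<omega>. (\<Sum>g'\<in>{t<..T}. indicator (cell M G S (\<lambda>x. x = enat g') \<sigma>) \<omega> * Z (enat g') \<omega>) \<partial>M)
        = (\<Sum>g'\<in>{t<..T}. \<integral>\<omega>. indicator (cell M G S (\<lambda>x. x = enat g') \<sigma>) \<omega> * Z (enat g') \<omega> \<partial>M)"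
      by (intro Bochner_Integration.integral_sum int_cell) auto
    finally show ?thesis
      unfolding eq(2) .
  qed
qed

lemma cohort_integral_no_anticipation:
  assumes no_antic: "no_anticipation M G S Y T SS"
    and fin: "finite_measure M" and sets: "cell M G S (\<lambda>x. x = enat g') \<sigma> \<in> sets M"
    and cohort: "g' \<in> {1..T}" "\<tau> < g'" "\<sigma> \<in> SS"
  shows "(\<integral>\<omega>. indicator (cell M G S (\<lambda>x. x = enat g') \<sigma>) \<omega> * Y \<tau> (enat g') \<sigma> \<omega> \<partial>M)
    = (\<integral>\<omega>. indicator (cell M G S (\<lambda>x. x = enat g') \<sigma>) \<omega> * Y \<tau> \<infinity> \<sigma> \<omega> \<partial>M)"
proof (rule set_integral_eq_if_cexp_eq[OF fin sets])
  assume "measure M (cell M G S (\<lambda>x. x = enat g') \<sigma>) > 0"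
  then have "cexp M (cell M G S (\<lambda>x. x = enat g') \<sigma>) (pot Y S \<tau> (enat g'))
      = cexp M (cell M G S (\<lambda>x. x = enat g') \<sigma>) (pot Y S \<tau> \<infinity>)"
    using no_antic cohort unfolding no_anticipation_def by blast
  then show "cexp M (cell M G S (\<lambda>x. x = enat g') \<sigma>) (Y \<tau> (enat g') \<sigma>)
      = cexp M (cell M G S (\<lambda>x. x = enat g') \<sigma>) (Y \<tau> \<infinity> \<sigma>)"
    by (simp add: cexp_cong[OF pot_on_cell])
qed

lemma set_integral_later_cell_obs:
  fixes M :: "'a measure" and G :: "'a \<Rightarrow> enat" and S :: "'a \<Rightarrow> 's"
    and Y :: "nat \<Rightarrow> enat \<Rightarrow> 's \<Rightarrow> 'a \<Rightarrow> real" and t :: nat and \<sigma> :: 's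
  defines "B \<equiv> cell M G S (\<lambda>x. x > enat t) \<sigma>"
  assumes fin: "finite_measure M"
    and G_meas: "G \<in> measurable M (count_space UNIV)"
    and S_meas: "S \<in> measurable M (count_space UNIV)"
    and G_range: "\<forall>\<omega>\<in>space M. G \<omega> \<in> enat ` {1..T} \<union> {\<infinity>}"
    and no_antic: "no_anticipation M G S Y T SS"
    and \<sigma>: "\<sigma> \<in> SS" and \<tau>: "\<tau> \<le> t"
    and int: "\<And>g'. g' \<in> enat ` {t<..T} \<union> {\<infinity>} \<Longrightarrow> integrable M (Y \<tau> g' \<sigma>)"
  shows "integrable M (\<lambda>\<omega>. indicator B \<omega> * obs Y G S \<tau> \<omega>)"
    and "(\<integral>\<omega>. indicator B \<omega> * obs Y G S \<tau> \<omega> \<partial>M) = (\<integral>\<omega>. indicator B \<omega> * Y \<tau> \<infinity> \<sigma> \<omega> \<partial>M)"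
proof -
  have obs_B: "indicator B \<omega> * obs Y G S \<tau> \<omega> = indicator B \<omega> * Y \<tau> (G \<omega>) \<sigma> \<omega>" for \<omega>
    by (auto simp: B_def obs_on_cell split: split_indicator)
  note split_obs = later_cell_integral_split[OF G_meas S_meas G_range, where Z="\<lambda>g'. Y \<tau> g' \<sigma>"]
  note split_untreated = later_cell_integral_split[OF G_meas S_meas G_range, where Z="\<lambda>_. Y \<tau> \<infinity> \<sigma>"]
  show "integrable M (\<lambda>\<omega>. indicator B \<omega> * obs Y G S \<tau> \<omega>)"
    unfolding obs_B unfolding B_def by (rule split_obs(1)) (rule int)
  have cohorts: "(\<integral>\<omega>. indicator (cell M G S (\<lambda>x. x = enat g') \<sigma>) \<omega> * Y \<tau> (enat g') \<sigma> \<omega> \<partial>M)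
      = (\<integral>\<omega>. indicator (cell M G S (\<lambda>x. x = enat g') \<sigma>) \<omega> * Y \<tau> \<infinity> \<sigma> \<omega> \<partial>M)"
    if "g' \<in> {t<..T}" for g'
    using that \<sigma> \<tau>
    by (intro cohort_integral_no_anticipation[OF no_antic fin cell_in_sets[OF G_meas S_meas]])
      auto
  have "(\<integral>\<omega>. indicator B \<omega> * obs Y G S \<tau> \<omega> \<partial>M) = (\<integral>\<omega>. indicator B \<omega> * Y \<tau> (G \<omega>) \<sigma> \<omega> \<partial>M)"
    by (simp only: obs_B)
  also have "\<dots> = (\<integral>\<omega>. indicator (cell M G S (\<lambda>x. x = \<infinity>) \<sigma>) \<omega> * Y \<tau> \<infinity> \<sigma> \<omega> \<partial>M)
      + (\<Sum>g'\<in>{t<..T}. \<integral>\<omega>. indicator (cell M G S (\<lambda>x. x = enat g') \<sigma>) \<omega> * Y \<tau> (enat g') \<sigma> \<omega> \<partial>M)"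
    unfolding B_def by (rule split_obs(2)) (rule int)
  also have "\<dots> = (\<integral>\<omega>. indicator (cell M G S (\<lambda>x. x = \<infinity>) \<sigma>) \<omega> * Y \<tau> \<infinity> \<sigma> \<omega> \<partial>M)
      + (\<Sum>g'\<in>{t<..T}. \<integral>\<omega>. indicator (cell M G S (\<lambda>x. x = enat g') \<sigma>) \<omega> * Y \<tau> \<infinity> \<sigma> \<omega> \<partial>M)"
    using cohorts by simp
  also have "\<dots> = (\<integral>\<omega>. indicator B \<omega> * Y \<tau> \<infinity> \<sigma> \<omega> \<partial>M)"
    unfolding B_def by (rule split_untreated(2)[symmetric]) (simp add: int)
  finally show "(\<integral>\<omega>. indicator B \<omega> * obs Y G S \<tau> \<omega> \<partial>M) = (\<integral>\<omega>. indicator B \<omega> * Y \<tau> \<infinity> \<sigma> \<omega> \<partial>M)" .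
qed

lemma cexp_later_cell_change:
  fixes M :: "'a measure" and G :: "'a \<Rightarrow> enat" and S :: "'a \<Rightarrow> 's"
    and Y :: "nat \<Rightarrow> enat \<Rightarrow> 's \<Rightarrow> 'a \<Rightarrow> real" and t :: nat and \<sigma> :: 's
  defines "B \<equiv> cell M G S (\<lambda>x. x > enat t) \<sigma>"
  assumes fin: "finite_measure M"
    and G_meas: "G \<in> measurable M (count_space UNIV)"
    and S_meas: "S \<in> measurable M (count_space UNIV)"
    and G_range: "\<forall>\<omega>\<in>space M. G \<omega> \<in> enat ` {1..T} \<union> {\<infinity>}"
    and no_antic: "no_anticipation M G S Y T SS"
    and \<sigma>: "\<sigma> \<in> SS" and \<tau>: "\<tau>1 \<le> t" "\<tau>0 \<le> t"
    and int: "\<And>\<tau> g'. \<tau> \<le> t \<Longrightarrow> g' \<in> enat ` {t<..T} \<union> {\<infinity>} \<Longrightarrow> integrable M (Y \<tau> g' \<sigma>)"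
  shows "cexp M B (\<lambda>\<omega>. obs Y G S \<tau>1 \<omega> - obs Y G S \<tau>0 \<omega>)
    = cexp M B (\<lambda>\<omega>. pot Y S \<tau>1 \<infinity> \<omega> - pot Y S \<tau>0 \<infinity> \<omega>)"
proof -
  note later = set_integral_later_cell_obs[OF fin G_meas S_meas G_range no_antic \<sigma>]
  note later1 = later[OF \<tau>(1) int[OF \<tau>(1)]] and later0 = later[OF \<tau>(2) int[OF \<tau>(2)]]
  have B_sets: "B \<in> sets M"
    unfolding B_def by (rule cell_in_sets[OF G_meas S_meas])
  have "cexp M B (\<lambda>\<omega>. obs Y G S \<tau>1 \<omega> - obs Y G S \<tau>0 \<omega>)
      = cexp M B (obs Y G S \<tau>1) - cexp M B (obs Y G S \<tau>0)"
    using later1(1) later0(1) unfolding B_def by (rule cexp_diff)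
  also have "\<dots> = cexp M B (Y \<tau>1 \<infinity> \<sigma>) - cexp M B (Y \<tau>0 \<infinity> \<sigma>)"
    using later1(2) later0(2) by (simp add: cexp_def B_def)
  also have "\<dots> = cexp M B (\<lambda>\<omega>. Y \<tau>1 \<infinity> \<sigma> \<omega> - Y \<tau>0 \<infinity> \<sigma> \<omega>)"
    using \<tau> by (intro cexp_diff[symmetric] integrable_indicator_mult[OF B_sets] int) auto
  also have "\<dots> = cexp M B (\<lambda>\<omega>. pot Y S \<tau>1 \<infinity> \<omega> - pot Y S \<tau>0 \<infinity> \<omega>)"
    by (rule cexp_cong) (simp add: B_def pot_on_cell)
  finally show ?thesis .
qed

theorem proposition1:
  fixes M :: "'a measure" and T :: nat and SS :: "'s set"
    and G :: "'a \<Rightarrow> enat" and S :: "'a \<Rightarrow> 's"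
    and Y :: "nat \<Rightarrow> enat \<Rightarrow> 's \<Rightarrow> 'a \<Rightarrow> real"
    and s s' :: 's and g t :: nat
  assumes prob: "prob_space M"
    and SS_fin: "finite SS"
    and G_meas: "G \<in> measurable M (count_space UNIV)"
    and S_meas: "S \<in> measurable M (count_space UNIV)"
    and G_range: "\<forall>\<omega>\<in>space M. G \<omega> \<in> enat ` {1..T} \<union> {\<infinity>}"
    and S_range: "\<forall>\<omega>\<in>space M. S \<omega> \<in> SS"
    and Y_int: "\<forall>\<tau>\<le>T. \<forall>g'\<in>enat ` {1..T} \<union> {\<infinity>}. \<forall>\<sigma>\<in>SS. integrable M (Y \<tau> g' \<sigma>)"
    and s_in: "s \<in> SS" and s'_in: "s' \<in> SS" and ss': "s \<noteq> s'"
    and g_range: "1 \<le> g" and gt: "g \<le> t" and tT: "t \<le> T"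
    and pos_g: "\<forall>\<sigma>\<in>{s, s'}. measure M (cell M G S (\<lambda>x. x = enat g) \<sigma>) > 0"
    and no_antic: "\<forall>g'\<in>{1..T}. \<forall>\<tau><g'. \<forall>\<sigma>\<in>SS.
        measure M (cell M G S (\<lambda>x. x = enat g') \<sigma>) > 0 \<longrightarrow>
        cexp M (cell M G S (\<lambda>x. x = enat g') \<sigma>) (pot Y S \<tau> (enat g'))
          = cexp M (cell M G S (\<lambda>x. x = enat g') \<sigma>) (pot Y S \<tau> \<infinity>)"
  shows
   "((\<forall>\<sigma>\<in>{s, s'}. measure M (cell M G S (\<lambda>x. x > enat t) \<sigma>) > 0) \<and>
     cexp M (cell M G S (\<lambda>x. x = enat g) s) (\<lambda>\<omega>. pot Y S t \<infinity> \<omega> - pot Y S (g - 1) \<infinity> \<omega>)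
     - cexp M (cell M G S (\<lambda>x. x = enat g) s') (\<lambda>\<omega>. pot Y S t \<infinity> \<omega> - pot Y S (g - 1) \<infinity> \<omega>)
     = cexp M (cell M G S (\<lambda>x. x > enat t) s) (\<lambda>\<omega>. pot Y S t \<infinity> \<omega> - pot Y S (g - 1) \<infinity> \<omega>)
     - cexp M (cell M G S (\<lambda>x. x > enat t) s') (\<lambda>\<omega>. pot Y S t \<infinity> \<omega> - pot Y S (g - 1) \<infinity> \<omega>)
    \<longrightarrow>
     DATT M G S Y s s' g t =
       cexp M (cell M G S (\<lambda>x. x = enat g) s) (\<lambda>\<omega>. obs Y G S t \<omega> - obs Y G S (g - 1) \<omega>)
     - cexp M (cell M G S (\<lambda>x. x = enat g) s') (\<lambda>\<omega>. obs Y G S t \<omega> - obs Y G S (g - 1) \<omega>)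
     - (cexp M (cell M G S (\<lambda>x. x > enat t) s) (\<lambda>\<omega>. obs Y G S t \<omega> - obs Y G S (g - 1) \<omega>)
      - cexp M (cell M G S (\<lambda>x. x > enat t) s') (\<lambda>\<omega>. obs Y G S t \<omega> - obs Y G S (g - 1) \<omega>)))
  \<and>
   ((\<forall>\<sigma>\<in>{s, s'}. measure M (cell M G S (\<lambda>x. x = \<infinity>) \<sigma>) > 0) \<and>
     cexp M (cell M G S (\<lambda>x. x = enat g) s) (\<lambda>\<omega>. pot Y S t \<infinity> \<omega> - pot Y S (g - 1) \<infinity> \<omega>)
     - cexp M (cell M G S (\<lambda>x. x = enat g) s') (\<lambda>\<omega>. pot Y S t \<infinity> \<omega> - pot Y S (g - 1) \<infinity> \<omega>)
     = cexp M (cell M G S (\<lambda>x. x = \<infinity>) s) (\<lambda>\<omega>. pot Y S t \<infinity> \<omega> - pot Y S (g - 1) \<infinity> \<omega>)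
     - cexp M (cell M G S (\<lambda>x. x = \<infinity>) s') (\<lambda>\<omega>. pot Y S t \<infinity> \<omega> - pot Y S (g - 1) \<infinity> \<omega>)
    \<longrightarrow>
     DATT M G S Y s s' g t =
       cexp M (cell M G S (\<lambda>x. x = enat g) s) (\<lambda>\<omega>. obs Y G S t \<omega> - obs Y G S (g - 1) \<omega>)
     - cexp M (cell M G S (\<lambda>x. x = enat g) s') (\<lambda>\<omega>. obs Y G S t \<omega> - obs Y G S (g - 1) \<omega>)
     - (cexp M (cell M G S (\<lambda>x. x = \<infinity>) s) (\<lambda>\<omega>. obs Y G S t \<omega> - obs Y G S (g - 1) \<omega>)
      - cexp M (cell M G S (\<lambda>x. x = \<infinity>) s') (\<lambda>\<omega>. obs Y G S t \<omega> - obs Y G S (g - 1) \<omega>)))"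
proof -
  interpret prob_space M by (rule prob)
  have no_anticipation_holds: "no_anticipation M G S Y T SS"
    unfolding no_anticipation_def by (rule no_antic)
  have \<sigma>_in: "\<sigma> \<in> SS" if "\<sigma> \<in> {s, s'}" for \<sigma>
    using that s_in s'_in by auto
  have int: "integrable M (Y \<tau> g' \<sigma>)"
    if "\<tau> \<le> t" "g' \<in> enat ` {1..T} \<union> {\<infinity>}" "\<sigma> \<in> {s, s'}" for \<tau> g' \<sigma>
    using Y_int that tT \<sigma>_in by force
  have treated: "cexp M (cell M G S (\<lambda>x. x = enat g) \<sigma>) (\<lambda>\<omega>. obs Y G S t \<omega> - obs Y G S (g - 1) \<omega>)
      = cexp M (cell M G S (\<lambda>x. x = enat g) \<sigma>) (\<lambda>\<omega>. pot Y S t (enat g) \<omega> - pot Y S t \<infinity> \<omega>)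
      + cexp M (cell M G S (\<lambda>x. x = enat g) \<sigma>) (\<lambda>\<omega>. pot Y S t \<infinity> \<omega> - pot Y S (g - 1) \<infinity> \<omega>)"
    if "\<sigma> \<in> {s, s'}" for \<sigma>
    using that g_range gt tT pos_g no_antic \<sigma>_in[OF that]
    by (intro cexp_treated_cohort_change cell_in_sets[OF G_meas S_meas] int) auto
  have not_yet_treated:
    "cexp M (cell M G S (\<lambda>x. x > enat t) \<sigma>) (\<lambda>\<omega>. obs Y G S t \<omega> - obs Y G S (g - 1) \<omega>)
      = cexp M (cell M G S (\<lambda>x. x > enat t) \<sigma>) (\<lambda>\<omega>. pot Y S t \<infinity> \<omega> - pot Y S (g - 1) \<infinity> \<omega>)"
    if "\<sigma> \<in> {s, s'}" for \<sigma>
    using that gt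
    by (intro cexp_later_cell_change[OF finite_measure_axioms G_meas S_meas G_range
        no_anticipation_holds \<sigma>_in[OF that]] int) auto
  have never_treated:
    "cexp M (cell M G S (\<lambda>x. x = \<infinity>) \<sigma>) (\<lambda>\<omega>. obs Y G S t \<omega> - obs Y G S (g - 1) \<omega>)
      = cexp M (cell M G S (\<lambda>x. x = \<infinity>) \<sigma>) (\<lambda>\<omega>. pot Y S t \<infinity> \<omega> - pot Y S (g - 1) \<infinity> \<omega>)" for \<sigma>
    by (rule cexp_cong) (simp add: obs_on_cohort_cell pot_on_cell)
  show ?thesis
    using treated[of s] treated[of s'] not_yet_treated[of s] not_yet_treated[of s']
      never_treated[of s] never_treated[of s']
    unfolding DATT_def by simp
qed

end
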